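(* Let $k\ge 2$ be an integer. Every finite simple graph $G$ is an induced subgraph of some finite simple graph $H$ that admits a closed neighborhood balanced $k$-coloring.
   Context: For a vertex $v$ of a graph $G$, $N[v]=\{v\}\cup\{u : uv\in E(G)\}$ is its closed neighborhood. For an integer $k\ge 2$, a closed neighborhood balanced $k$-coloring of $G$ is a map $c: V(G)\to\{1,2,\dots,k\}$ such that for every vertex $v$ the numbers $|\{u\in N[v] : c(u)=i\}|$, $i=1,\dots,k$, are all equal. *)

theory Defs
  imports Main
begin

definition simple_graph :: "'a set \<Rightarrow> 'a set set \<Rightarrow> bool" where
  "simple_graph V E \<longleftrightarrow> finite V \<and> (\<forall>e\<in>E. e \<subseteq> V \<and> card e = 2)"

definition closed_nbhd :: "'a set set \<Rightarrow> 'a \<Rightarrow> 'a set" where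
  "closed_nbhd E v = insert v {u. {u, v} \<in> E}"

definition cnb_coloring :: "'a set \<Rightarrow> 'a set set \<Rightarrow> nat \<Rightarrow> ('a \<Rightarrow> nat) \<Rightarrow> bool" where
  "cnb_coloring V E k c \<longleftrightarrow>
     (\<forall>v\<in>V. c v \<in> {1..k}) \<and>
     (\<forall>v\<in>V. \<forall>i\<in>{1..k}. \<forall>j\<in>{1..k}.
        card {u\<in>closed_nbhd E v. c u = i} = card {u\<in>closed_nbhd E v. c u = j})"

definition induced_embedding ::
  "('a \<Rightarrow> 'b) \<Rightarrow> 'a set \<Rightarrow> 'a set set \<Rightarrow> 'b set \<Rightarrow> 'b set set \<Rightarrow> bool" where
  "induced_embedding f V E W F \<longleftrightarrow>
     inj_on f V \<and> f ` V \<subseteq> W \<and>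
     (\<forall>u\<in>V. \<forall>v\<in>V. {f u, f v} \<in> F \<longleftrightarrow> {u, v} \<in> E)"

end

theory Submission
  imports Defs
begin

text \<open>Replace every vertex of G by a clique on the colour set {1..k}, joining two copies of
  distinct vertices exactly when the vertices are adjacent in G (the lexicographic product
  of G with K_k). The closed neighbourhood of (v, i) is then N[v] \<times> {1..k}, so colouring each
  vertex by its second coordinate is balanced, and the copies with colour 1 induce G.\<close>

definition clique_blowup_adj ::
  "'c set \<Rightarrow> 'a set \<Rightarrow> 'a set set \<Rightarrow> 'a \<times> 'c \<Rightarrow> 'a \<times> 'c \<Rightarrow> bool" where
  "clique_blowup_adj C V E x y \<longleftrightarrow>
     fst x \<in> V \<and> fst y \<in> V \<and> snd x \<in> C \<and> snd y \<in> C \<and>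
     ((fst x = fst y \<and> snd x \<noteq> snd y) \<or> {fst x, fst y} \<in> E)"

definition clique_blowup_edges :: "'c set \<Rightarrow> 'a set \<Rightarrow> 'a set set \<Rightarrow> ('a \<times> 'c) set set" where
  "clique_blowup_edges C V E = {{x, y} | x y. clique_blowup_adj C V E x y}"

lemma clique_blowup_adj_sym:
  "clique_blowup_adj C V E x y \<Longrightarrow> clique_blowup_adj C V E y x"
  unfolding clique_blowup_adj_def by (auto simp: insert_commute)

lemma doubleton_in_clique_blowup_edges_iff:
  "{x, y} \<in> clique_blowup_edges C V E \<longleftrightarrow> clique_blowup_adj C V E x y"
proof
  assume "{x, y} \<in> clique_blowup_edges C V E"
  then obtain a b where "{x, y} = {a, b}" "clique_blowup_adj C V E a b"
    unfolding clique_blowup_edges_def by blast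
  then show "clique_blowup_adj C V E x y"
    by (metis doubleton_eq_iff clique_blowup_adj_sym)
qed (unfold clique_blowup_edges_def, blast)

lemma simple_graph_clique_blowup:
  assumes "simple_graph V E" and "finite C"
  shows "simple_graph (V \<times> C) (clique_blowup_edges C V E)"
  unfolding simple_graph_def
proof (intro conjI ballI)
  show "finite (V \<times> C)"
    using assms unfolding simple_graph_def by simp
  fix e assume "e \<in> clique_blowup_edges C V E"
  then obtain x y where e: "e = {x, y}" and adj: "clique_blowup_adj C V E x y"
    unfolding clique_blowup_edges_def by blast
  have "u \<noteq> v" if "{u, v} \<in> E" for u v
  proof -
    have "card {u, v} = 2"
      using assms(1) that unfolding simple_graph_def by blast
    then show ?thesis
      by (cases "u = v") simp_all
  qed
  then have "x \<noteq> y"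
    using adj unfolding clique_blowup_adj_def by auto
  moreover have "x \<in> V \<times> C" "y \<in> V \<times> C"
    using adj unfolding clique_blowup_adj_def by (auto simp: mem_Times_iff)
  ultimately show "e \<subseteq> V \<times> C" "card e = 2"
    using e by auto
qed

lemma induced_embedding_clique_blowup:
  assumes "c \<in> C"
  shows "induced_embedding (\<lambda>v. (v, c)) V E (V \<times> C) (clique_blowup_edges C V E)"
  using assms
  by (auto simp: induced_embedding_def inj_on_def doubleton_in_clique_blowup_edges_iff
      clique_blowup_adj_def)

lemma closed_nbhd_clique_blowup:
  assumes "simple_graph V E" and "v \<in> V" and "i \<in> C"
  shows "closed_nbhd (clique_blowup_edges C V E) (v, i) = closed_nbhd E v \<times> C"
proof -
  have "u \<in> V" if "{u, v} \<in> E" for u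
    using assms(1) that unfolding simple_graph_def by blast
  then show ?thesis
    using assms(2,3)
    by (auto simp: closed_nbhd_def doubleton_in_clique_blowup_edges_iff clique_blowup_adj_def)
qed

lemma finite_closed_nbhd:
  assumes "simple_graph V E"
  shows "finite (closed_nbhd E v)"
proof -
  have "closed_nbhd E v \<subseteq> insert v V"
    using assms unfolding simple_graph_def closed_nbhd_def by blast
  then show ?thesis
    using assms unfolding simple_graph_def by (simp add: finite_subset)
qed

lemma card_colour_class_Times:
  assumes "finite A" and "i \<in> C"
  shows "card {x \<in> A \<times> C. snd x = i} = card A"
proof -
  have "{x \<in> A \<times> C. snd x = i} = A \<times> {i}"
    using assms(2) by auto
  then show ?thesis
    using assms(1) by (simp add: card_cartesian_product)
qed

lemma cnb_coloring_clique_blowup: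
  assumes "simple_graph V E"
  shows "cnb_coloring (V \<times> {1..k}) (clique_blowup_edges {1..k} V E) k snd"
  unfolding cnb_coloring_def
proof (intro conjI ballI)
  fix x i j assume "x \<in> V \<times> {1..k}" and "i \<in> {1..k}" "j \<in> {1..k}"
  then obtain v l where x: "x = (v, l)" "v \<in> V" "l \<in> {1..k}"
    by blast
  have "card {u \<in> closed_nbhd (clique_blowup_edges {1..k} V E) x. snd u = m}
          = card (closed_nbhd E v)" if "m \<in> {1..k}" for m
    unfolding x(1) closed_nbhd_clique_blowup[OF assms x(2,3)]
    using card_colour_class_Times[OF finite_closed_nbhd[OF assms] that] .
  then show "card {u \<in> closed_nbhd (clique_blowup_edges {1..k} V E) x. snd u = i}
           = card {u \<in> closed_nbhd (clique_blowup_edges {1..k} V E) x. snd u = j}"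
    using \<open>i \<in> {1..k}\<close> \<open>j \<in> {1..k}\<close> by simp
qed auto

theorem theorem2p6:
  fixes k :: nat and V :: "'a set" and E :: "'a set set"
  assumes "k \<ge> 2" and "simple_graph V E"
  shows "\<exists>(W :: ('a \<times> nat) set) F f c.
           simple_graph W F \<and> induced_embedding f V E W F \<and> cnb_coloring W F k c"
proof -
  let ?F = "clique_blowup_edges {1..k} V E"
  have "simple_graph (V \<times> {1..k}) ?F"
    using simple_graph_clique_blowup[OF assms(2) finite_atLeastAtMost] .
  moreover have "induced_embedding (\<lambda>v. (v, 1)) V E (V \<times> {1..k}) ?F"
    using assms(1) by (intro induced_embedding_clique_blowup) simp
  moreover have "cnb_coloring (V \<times> {1..k}) ?F k snd"
    using cnb_coloring_clique_blowup[OF assms(2)] .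
  ultimately show ?thesis
    by blast
qed

end
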